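(* Let $p\in\mathbb{T}^{\mathcal{P}([n])}$ be a tropical Wick vector. Then the cocycle space $\mathcal{Q}(p)\subseteq\mathbb{T}^{\mathcal{J}}$ of $p$ is the set of admissible vectors in the tropical convex hull of the cocircuits of $p$.
   Context: $\mathbb{T}=\mathbb{R}\cup\{\infty\}$ with $\oplus=\min$, $\odot=+$; $\mathcal{P}([n])$ the set of subsets of $[n]$. A tropical Wick vector is $p$ such that for all $S,T\subseteq[n]$ the minimum $\min_{i\in S\Delta T}(p_{S\Delta\{i\}}+p_{T\Delta\{i\}})$ is attained at least twice or equals $\infty$. Let $\mathcal{J}=\{1,\dots,n,1^*,\dots,n^*\}$ with involution $i\leftrightarrow i^*$; $X\subseteq\mathcal{J}$ is admissible if $X\cap X^*=\emptyset$, and a vector in $\mathbb{T}^{\mathcal{J}}$ is admissible if its support (coordinates $\neq\infty$) is admissible. For $S\subseteq[n]$ let $\bar S=S\cup\{i^*:i\in[n]\setminus S\}$ and $\bar p_{\bar S}:=p_S$. For $T\subseteq[n]$: $(c_T)_i=\bar p_{\bar T\Delta\{i,i^*\}}$ if $i\in\bar T$, $\infty$ otherwise; $(c^*_T)_i=\bar p_{\bar T\Delta\{i,i^*\}}$ if $i\notin\bar T$, $\infty$ otherwise. Circuits of $p$: $c_T+\lambda\mathbf{1}$ ($\lambda\in\mathbb{R}$) with nonempty support; cocircuits: $c^*_T+\lambda\mathbf{1}$ with nonempty support. $x,y$ are tropically orthogonal if $\min_k(x_k+y_k)$ is attained at least twice or equals $\infty$. The cocycle space $\mathcal{Q}(p)$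 is the set of admissible vectors tropically orthogonal to all circuits of $p$. The tropical convex hull of a set $A$ is the set of finite tropical linear combinations $\lambda_1\odot a_1\oplus\cdots\oplus\lambda_r\odot a_r$, $a_k\in A$, $\lambda_k\in\mathbb{T}$. *)

theory Defs
  imports "HOL-Library.Extended_Real"
begin

text \<open>Tropical numbers T = R \<union> {\<infinity>} are modelled as extended reals different from -\<infinity>;
  tropical addition is min, tropical multiplication is +.
  The index set J = {1..n, 1*..n*} is modelled inside nat + nat:
  Inl i stands for i, Inr i stands for i*.\<close>

definition Jset :: "nat \<Rightarrow> (nat + nat) set" where
  "Jset n = Inl ` {1..n} \<union> Inr ` {1..n}"

fun star :: "nat + nat \<Rightarrow> nat + nat" where
  "star (Inl i) = Inr i"
| "star (Inr i) = Inl i"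

definition min_twice :: "'a set \<Rightarrow> ('a \<Rightarrow> ereal) \<Rightarrow> bool" where
  "min_twice A f \<longleftrightarrow> (INF a\<in>A. f a) = \<infinity> \<or>
     (\<exists>a\<in>A. \<exists>b\<in>A. a \<noteq> b \<and> f a = (INF c\<in>A. f c) \<and> f b = (INF c\<in>A. f c))"

text \<open>Tropical Wick vector p in T^{P([n])} (only its values on subsets of [n] matter).\<close>
definition tropical_wick :: "nat \<Rightarrow> (nat set \<Rightarrow> ereal) \<Rightarrow> bool" where
  "tropical_wick n p \<longleftrightarrow>
     (\<forall>S. S \<subseteq> {1..n} \<longrightarrow> p S \<noteq> -\<infinity>) \<and>
     (\<exists>S. S \<subseteq> {1..n} \<and> p S \<noteq> \<infinity>) \<and>
     (\<forall>S T. S \<subseteq> {1..n} \<longrightarrow> T \<subseteq> {1..n} \<longrightarrow>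
        min_twice (sym_diff S T) (\<lambda>i. p (sym_diff S {i}) + p (sym_diff T {i})))"

text \<open>Vectors in T^J: no coordinate -\<infinity>, and value \<infinity> outside J (coordinates outside J are dummies).\<close>
definition tvec :: "nat \<Rightarrow> (nat + nat \<Rightarrow> ereal) \<Rightarrow> bool" where
  "tvec n x \<longleftrightarrow> (\<forall>k. x k \<noteq> -\<infinity>) \<and> (\<forall>k. k \<notin> Jset n \<longrightarrow> x k = \<infinity>)"

definition supp :: "nat \<Rightarrow> (nat + nat \<Rightarrow> ereal) \<Rightarrow> (nat + nat) set" where
  "supp n x = {k \<in> Jset n. x k \<noteq> \<infinity>}"

definition admissible_set :: "(nat + nat) set \<Rightarrow> bool" where
  "admissible_set X \<longleftrightarrow> X \<inter> star ` X = {}"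

definition admissible_vec :: "nat \<Rightarrow> (nat + nat \<Rightarrow> ereal) \<Rightarrow> bool" where
  "admissible_vec n x \<longleftrightarrow> tvec n x \<and> admissible_set (supp n x)"

definition bar :: "nat \<Rightarrow> nat set \<Rightarrow> (nat + nat) set" where
  "bar n S = Inl ` S \<union> Inr ` ({1..n} - S)"

definition unbar :: "(nat + nat) set \<Rightarrow> nat set" where
  "unbar X = {i. Inl i \<in> X}"

definition pbar :: "(nat set \<Rightarrow> ereal) \<Rightarrow> (nat + nat) set \<Rightarrow> ereal" where
  "pbar p X = p (unbar X)"

definition circ_vec :: "nat \<Rightarrow> (nat set \<Rightarrow> ereal) \<Rightarrow> nat set \<Rightarrow> nat + nat \<Rightarrow> ereal" where
  "circ_vec n p T k =
     (if k \<in> Jset n \<and> k \<in> bar n T then pbar p (sym_diff (bar n T) {k, star k}) else \<infinity>)"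

definition cocirc_vec :: "nat \<Rightarrow> (nat set \<Rightarrow> ereal) \<Rightarrow> nat set \<Rightarrow> nat + nat \<Rightarrow> ereal" where
  "cocirc_vec n p T k =
     (if k \<in> Jset n \<and> k \<notin> bar n T then pbar p (sym_diff (bar n T) {k, star k}) else \<infinity>)"

definition circuits :: "nat \<Rightarrow> (nat set \<Rightarrow> ereal) \<Rightarrow> (nat + nat \<Rightarrow> ereal) set" where
  "circuits n p = {x. \<exists>T (t::real). T \<subseteq> {1..n} \<and> x = (\<lambda>k. circ_vec n p T k + ereal t) \<and> supp n x \<noteq> {}}"

definition cocircuits :: "nat \<Rightarrow> (nat set \<Rightarrow> ereal) \<Rightarrow> (nat + nat \<Rightarrow> ereal) set" where
  "cocircuits n p = {x. \<exists>T (t::real). T \<subseteq> {1..n} \<and> x = (\<lambda>k. cocirc_vec n p T k + ereal t) \<and> supp n x \<noteq> {}}"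

definition trop_orth :: "nat \<Rightarrow> (nat + nat \<Rightarrow> ereal) \<Rightarrow> (nat + nat \<Rightarrow> ereal) \<Rightarrow> bool" where
  "trop_orth n x y \<longleftrightarrow> min_twice (Jset n) (\<lambda>k. x k + y k)"

definition cocycle_space :: "nat \<Rightarrow> (nat set \<Rightarrow> ereal) \<Rightarrow> (nat + nat \<Rightarrow> ereal) set" where
  "cocycle_space n p = {x. admissible_vec n x \<and> (\<forall>c\<in>circuits n p. trop_orth n x c)}"

definition trop_hull :: "(nat + nat \<Rightarrow> ereal) set \<Rightarrow> (nat + nat \<Rightarrow> ereal) set" where
  "trop_hull A = {x. \<exists>F lam. finite F \<and> F \<subseteq> A \<and> (\<forall>a\<in>F. lam a \<noteq> -\<infinity>) \<and>
                       x = (\<lambda>k. INF a\<in>F. lam a + a k)}"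

end

theory Submission
  imports Defs "HOL-Library.Product_Lexorder"
begin

(* Cocircuits are orthogonal to circuits: for cocircuit T and circuit S the orthogonality
   condition is the Wick relation for S and T, reindexed along S \<Delta> T.  Orthogonality to a
   fixed vector survives tropical linear combinations, so the hull lies in the cocycle space.

   Conversely, let x be a cocycle and k0 a finite coordinate of x.  Among the U with p U finite
   choose one maximising the number of infinite coordinates of x on bar U and, among those,
   minimising p U - \<Sum>{x k | k \<in> bar U, x k finite}.  Orthogonality of x to a circuit lets us
   exchange coordinates so that k0 \<in> bar U, and optimality of U then says exactly that the
   cocircuit of U \<Delta> {k0}, shifted to agree with x at k0, lies above x.  The minimum of these
   finitely many cocircuits is x. *)

definition idx :: "nat + nat \<Rightarrow> nat" where
  "idx k = (case k of Inl i \<Rightarrow> i | Inr i \<Rightarrow> i)"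

lemma idx_simps [simp]: "idx (Inl i) = i" "idx (Inr i) = i"
  by (simp_all add: idx_def)

lemma idx_star [simp]: "idx (star k) = idx k"
  by (cases k) auto

lemma Jset_iff: "k \<in> Jset n \<longleftrightarrow> idx k \<in> {1..n}"
  by (cases k) (auto simp: Jset_def)

lemma star_Jset [simp]: "star k \<in> Jset n \<longleftrightarrow> k \<in> Jset n"
  by (simp add: Jset_iff)

lemma finite_Jset [simp]: "finite (Jset n)"
  by (simp add: Jset_def)

lemma bar_subset_Jset: "V \<subseteq> {1..n} \<Longrightarrow> bar n V \<subseteq> Jset n"
  by (auto simp: bar_def Jset_def)

lemma star_in_bar_iff:
  "V \<subseteq> {1..n} \<Longrightarrow> k \<in> Jset n \<Longrightarrow> star k \<in> bar n V \<longleftrightarrow> k \<notin> bar n V"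
  by (cases k) (auto simp: bar_def Jset_def)

lemma sym_diff_idx_subset: "V \<subseteq> {1..n} \<Longrightarrow> k \<in> Jset n \<Longrightarrow> sym_diff V {idx k} \<subseteq> {1..n}"
  by (auto simp: Jset_iff)

lemma bar_sym_diff_idx:
  "V \<subseteq> {1..n} \<Longrightarrow> k \<in> Jset n \<Longrightarrow> bar n (sym_diff V {idx k}) = sym_diff (bar n V) {k, star k}"
  by (cases k) (auto simp: bar_def Jset_def)

lemma unbar_sym_diff: "unbar (sym_diff (bar n T) {k, star k}) = sym_diff T {idx k}"
  by (cases k) (auto simp: bar_def unbar_def)

lemma circ_vec_eq:
  "circ_vec n p T k = (if k \<in> Jset n \<and> k \<in> bar n T then p (sym_diff T {idx k}) else \<infinity>)"
  unfolding circ_vec_def pbar_def unbar_sym_diff by simp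

lemma cocirc_vec_eq:
  "cocirc_vec n p T k = (if k \<in> Jset n \<and> k \<notin> bar n T then p (sym_diff T {idx k}) else \<infinity>)"
  unfolding cocirc_vec_def pbar_def unbar_sym_diff by simp

lemma sum_bar_sym_diff_idx:
  fixes h :: "nat + nat \<Rightarrow> 'a::ab_group_add"
  assumes "V \<subseteq> {1..n}" "k \<in> Jset n" "k \<in> bar n V"
  shows "(\<Sum>j\<in>bar n (sym_diff V {idx k}). h j) = (\<Sum>j\<in>bar n V. h j) - h k + h (star k)"
proof -
  have fin: "finite (bar n V)"
    using bar_subset_Jset[OF assms(1)] by (rule finite_subset) simp
  have star: "star k \<notin> bar n V"
    using star_in_bar_iff[OF assms(1,2)] assms(3) by simp
  have "bar n (sym_diff V {idx k}) = insert (star k) (bar n V - {k})"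
    unfolding bar_sym_diff_idx[OF assms(1,2)] using assms(3) star by auto
  moreover have "(\<Sum>j\<in>bar n V - {k}. h j) = (\<Sum>j\<in>bar n V. h j) - h k"
    using fin assms(3) by (simp add: sum_diff1)
  ultimately show ?thesis
    using fin star by simp
qed

lemma min_twice_iff:
  "min_twice A f \<longleftrightarrow> (\<forall>a\<in>A. f a = \<infinity>) \<or>
     (\<exists>a\<in>A. \<exists>b\<in>A. a \<noteq> b \<and> f a = f b \<and> (\<forall>c\<in>A. f a \<le> f c))"
proof -
  have attains: "f a = (INF c\<in>A. f c) \<longleftrightarrow> (\<forall>c\<in>A. f a \<le> f c)" if "a \<in> A" for a
    using that by (auto intro: antisym INF_lower INF_greatest)
  have "(INF c\<in>A. f c) = \<infinity> \<longleftrightarrow> (\<forall>a\<in>A. f a = \<infinity>)"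
    using INF_top_conv(1)[of f A] by (simp add: top_ereal_def)
  then show ?thesis
    unfolding min_twice_def using attains by (intro iffI; elim disjE; metis)
qed

lemma ex_minimizer:
  fixes f :: "'a \<Rightarrow> 'b::linorder"
  assumes "finite A" "A \<noteq> {}"
  obtains a where "a \<in> A" "\<And>b. b \<in> A \<Longrightarrow> f a \<le> f b"
  using ex_is_arg_min_if_finite[OF assms, of f] unfolding is_arg_min_linorder by blast

lemma min_twice_reindex:
  fixes g :: "'a \<Rightarrow> ereal" and e :: "'b \<Rightarrow> ereal"
  assumes "min_twice A g" "inj_on \<phi> A" "\<phi> ` A \<subseteq> B"
    and e_image: "\<And>a. a \<in> A \<Longrightarrow> e (\<phi> a) = g a + ereal r"
    and e_other: "\<And>b. b \<in> B \<Longrightarrow> b \<notin> \<phi> ` A \<Longrightarrow> e b = \<infinity>"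
  shows "min_twice B e"
proof -
  from assms(1) consider "\<forall>a\<in>A. g a = \<infinity>"
    | a a' where "a \<in> A" "a' \<in> A" "a \<noteq> a'" "g a = g a'" "\<And>c. c \<in> A \<Longrightarrow> g a \<le> g c"
    unfolding min_twice_iff by blast
  then show ?thesis
  proof cases
    case 1
    have "e b = \<infinity>" if "b \<in> B" for b
      using that 1 e_image e_other by (cases "b \<in> \<phi> ` A") auto
    then show ?thesis
      unfolding min_twice_iff by blast
  next
    case 2
    have "e (\<phi> a) \<le> e b" if "b \<in> B" for b
    proof (cases "b \<in> \<phi> ` A")
      case True
      then obtain c where "c \<in> A" "b = \<phi> c" by blast
      then show ?thesis
        using e_image 2(1,5) by (simp add: add_right_mono)
    next
      case False
      then show ?thesis using e_other that by simp
    qed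
    moreover have "\<phi> a \<noteq> \<phi> a'"
      using 2(1-3) assms(2) by (auto dest: inj_onD)
    moreover have "\<phi> a \<in> B" "\<phi> a' \<in> B" "e (\<phi> a) = e (\<phi> a')"
      using 2(1,2,4) assms(3) e_image by auto
    ultimately show ?thesis
      unfolding min_twice_iff by blast
  qed
qed

lemma min_twice_INF_add:
  fixes c :: "'b \<Rightarrow> ereal" and lam :: "('b \<Rightarrow> ereal) \<Rightarrow> ereal"
  assumes "finite J" "finite F"
    and orth: "\<And>a. a \<in> F \<Longrightarrow> min_twice J (\<lambda>k. a k + c k)"
  shows "min_twice J (\<lambda>k. (INF a\<in>F. lam a + a k) + c k)" (is "min_twice J ?g")
proof (cases "\<forall>k\<in>J. ?g k = \<infinity>")
  case True
  then show ?thesis by (simp add: min_twice_iff)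
next
  case False
  then obtain k2 where k2: "k2 \<in> J" "?g k2 \<noteq> \<infinity>" by blast
  then obtain k1 where k1: "k1 \<in> J" "\<And>k. k \<in> J \<Longrightarrow> ?g k1 \<le> ?g k"
    using ex_minimizer[OF \<open>finite J\<close>, of ?g] by blast
  have g_k1_finite: "?g k1 \<noteq> \<infinity>"
    using k1(2)[OF k2(1)] k2(2) by (metis ereal_infty_less_eq(1))
  have "F \<noteq> {}"
  proof
    assume "F = {}"
    then have "?g k1 = \<infinity>" by (simp add: top_ereal_def)
    with g_k1_finite show False ..
  qed
  then obtain a where a: "a \<in> F" "\<And>b. b \<in> F \<Longrightarrow> lam a + a k1 \<le> lam b + b k1"
    using ex_minimizer[OF \<open>finite F\<close>, of "\<lambda>b. lam b + b k1"] by blast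
  define h where "h k = a k + c k" for k
  \<comment> \<open>lam a + h dominates the combination and touches it at its minimiser k1,
      so both minimisers of h are minimisers of the combination\<close>
  have g_le: "?g k \<le> lam a + h k" for k
    unfolding h_def add.assoc[symmetric] using a(1) by (intro add_right_mono INF_lower)
  have "(INF b\<in>F. lam b + b k1) = lam a + a k1"
    using a by (intro antisym INF_lower INF_greatest)
  then have g_k1: "?g k1 = lam a + h k1"
    unfolding h_def by (simp add: add.assoc)
  from orth[OF a(1)] consider "\<forall>k\<in>J. h k = \<infinity>"
    | b b' where "b \<in> J" "b' \<in> J" "b \<noteq> b'" "h b = h b'" "\<And>k. k \<in> J \<Longrightarrow> h b \<le> h k"
    unfolding min_twice_iff h_def by blast
  then show ?thesis
  proof cases
    case 1
    then show ?thesis using g_k1 k1(1) g_k1_finite by simp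
  next
    case 2
    have "lam a + h b \<le> ?g k1"
      unfolding g_k1 using 2(5)[OF k1(1)] by (rule add_left_mono)
    then have "?g b \<le> ?g k1" "?g b' \<le> ?g k1"
      using g_le[of b] g_le[of b'] 2(4) by auto
    then have "?g b = ?g k1" "?g b' = ?g k1"
      using k1 2(1,2) by (auto intro: antisym)
    then have "\<forall>k\<in>J. ?g b \<le> ?g k" "?g b = ?g b'"
      using k1(2) by auto
    then show ?thesis
      unfolding min_twice_iff using 2(1-3) by blast
  qed
qed

lemma trop_orth_trop_hull:
  assumes "y \<in> trop_hull A" "\<And>a. a \<in> A \<Longrightarrow> trop_orth n a c"
  shows "trop_orth n y c"
proof -
  from assms(1) obtain F lam where "finite F" "F \<subseteq> A" "y = (\<lambda>k. INF a\<in>F. lam a + a k)"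
    unfolding trop_hull_def by blast
  moreover have "min_twice (Jset n) (\<lambda>k. a k + c k)" if "a \<in> F" for a
    using assms(2) \<open>F \<subseteq> A\<close> that unfolding trop_orth_def by blast
  ultimately show ?thesis
    unfolding trop_orth_def by (simp add: min_twice_INF_add)
qed

lemma mem_trop_hullI:
  assumes "finite K" "\<And>k. k \<notin> K \<Longrightarrow> y k = \<infinity>"
    and dominating: "\<And>k. k \<in> K \<Longrightarrow> \<exists>d\<in>A. (\<forall>j. y j \<le> d j) \<and> d k = y k"
  shows "y \<in> trop_hull A"
proof -
  obtain D where D: "\<And>k. k \<in> K \<Longrightarrow> D k \<in> A \<and> (\<forall>j. y j \<le> D k j) \<and> D k k = y k"
    using dominating by metis
  have "y j = (INF d\<in>D ` K. 0 + d j)" for j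
  proof (rule antisym)
    show "y j \<le> (INF d\<in>D ` K. 0 + d j)"
      using D by (auto intro!: INF_greatest)
    show "(INF d\<in>D ` K. 0 + d j) \<le> y j"
    proof (cases "j \<in> K")
      case True
      then show ?thesis using D[OF True] by (auto intro: INF_lower2)
    next
      case False
      then show ?thesis using assms(2) by simp
    qed
  qed
  then show ?thesis
    unfolding trop_hull_def using assms(1) D
    by (intro CollectI exI[of _ "D ` K"] exI[of _ "\<lambda>_. 0"]) auto
qed

lemma cocircuit_circuit_orth:
  assumes "tropical_wick n p" "d \<in> cocircuits n p" "c \<in> circuits n p"
  shows "trop_orth n d c"
proof -
  obtain T t where T: "T \<subseteq> {1..n}" and d: "d = (\<lambda>k. cocirc_vec n p T k + ereal t)"
    using assms(2) unfolding cocircuits_def by blast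
  obtain S s where S: "S \<subseteq> {1..n}" and c: "c = (\<lambda>k. circ_vec n p S k + ereal s)"
    using assms(3) unfolding circuits_def by blast
  define g where "g i = p (sym_diff S {i}) + p (sym_diff T {i})" for i
  define \<phi> where "\<phi> i = (if i \<in> S then Inl i else Inr i)" for i
  have g_min: "min_twice (sym_diff S T) g"
    using assms(1) S T unfolding tropical_wick_def g_def by blast
  \<comment> \<open>\<phi> identifies S \<Delta> T with the coordinates where both vectors may be finite\<close>
  have \<phi>: "\<phi> i \<in> Jset n" "\<phi> i \<in> bar n S" "\<phi> i \<notin> bar n T" "idx (\<phi> i) = i"
    if "i \<in> sym_diff S T" for i
    using that S T by (auto simp: bar_def Jset_def \<phi>_def)
  have \<phi>_onto: "k \<in> \<phi> ` sym_diff S T" if "k \<in> Jset n" "k \<in> bar n S" "k \<notin> bar n T" for k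
    using that S T by (cases k) (auto simp: bar_def Jset_def \<phi>_def image_iff)
  have "min_twice (Jset n) (\<lambda>k. d k + c k)"
  proof (rule min_twice_reindex[OF g_min, where r = "t + s"])
    show "inj_on \<phi> (sym_diff S T)"
      by (auto simp: inj_on_def \<phi>_def split: if_splits)
    show "\<phi> ` sym_diff S T \<subseteq> Jset n"
      using \<phi> by blast
    show "d (\<phi> i) + c (\<phi> i) = g i + ereal (t + s)" if "i \<in> sym_diff S T" for i
    proof -
      have "d (\<phi> i) + c (\<phi> i) = (p (sym_diff T {i}) + ereal t) + (p (sym_diff S {i}) + ereal s)"
        using \<phi>[OF that] by (simp add: d c cocirc_vec_eq circ_vec_eq)
      also have "\<dots> = g i + (ereal t + ereal s)"
        by (simp only: g_def ac_simps)
      finally show ?thesis by simp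
    qed
    show "d k + c k = \<infinity>" if "k \<in> Jset n" "k \<notin> \<phi> ` sym_diff S T" for k
      using that \<phi>_onto by (auto simp: d c cocirc_vec_eq circ_vec_eq)
  qed
  then show ?thesis
    unfolding trop_orth_def .
qed

locale cocycle =
  fixes n :: nat and p :: "nat set \<Rightarrow> ereal" and x :: "nat + nat \<Rightarrow> ereal"
  assumes wick: "tropical_wick n p"
    and x_cocycle: "x \<in> cocycle_space n p"
begin

definition feasible :: "nat set \<Rightarrow> bool" where
  "feasible V \<longleftrightarrow> V \<subseteq> {1..n} \<and> p V \<noteq> \<infinity>"

definition inf_count :: "nat set \<Rightarrow> real" where
  "inf_count V = (\<Sum>k\<in>bar n V. of_bool (x k = \<infinity>))"

(* Since real_of_ereal \<infinity> = 0, only the finite coordinates of x contribute. *)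
definition supp_sum :: "nat set \<Rightarrow> real" where
  "supp_sum V = (\<Sum>k\<in>bar n V. real_of_ereal (x k))"

definition weight :: "nat set \<Rightarrow> real" where
  "weight V = real_of_ereal (p V) - supp_sum V"

(* Pairs are ordered lexicographically: maximise inf_count first, then minimise weight. *)
definition optimal :: "nat set \<Rightarrow> bool" where
  "optimal = is_arg_min (\<lambda>V. (- inf_count V, weight V)) feasible"

lemma feasible_p_real:
  assumes "feasible V"
  obtains r where "p V = ereal r"
  using wick assms by (cases "p V") (auto simp: feasible_def tropical_wick_def)

lemma supp_x_real:
  assumes "k \<in> supp n x"
  obtains r where "x k = ereal r"
  using x_cocycle assms
  by (cases "x k") (auto simp: supp_def cocycle_space_def admissible_vec_def tvec_def)

lemma supp_Jset: "k \<in> supp n x \<Longrightarrow> k \<in> Jset n"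
  by (simp add: supp_def)

lemma supp_iff: "k \<in> Jset n \<Longrightarrow> k \<in> supp n x \<longleftrightarrow> x k \<noteq> \<infinity>"
  by (simp add: supp_def)

lemma supp_star:
  assumes "k \<in> supp n x"
  shows "x (star k) = \<infinity>"
proof (rule ccontr)
  assume "x (star k) \<noteq> \<infinity>"
  then have "star k \<in> supp n x \<inter> star ` supp n x"
    using assms supp_iff[of "star k"] supp_Jset[OF assms] by auto
  then show False
    using x_cocycle unfolding cocycle_space_def admissible_vec_def admissible_set_def by blast
qed

lemma x_orth_circuit: "c \<in> circuits n p \<Longrightarrow> trop_orth n x c"
  using x_cocycle by (simp add: cocycle_space_def)

lemma inf_count_sym_diff_idx:
  "V \<subseteq> {1..n} \<Longrightarrow> k \<in> Jset n \<Longrightarrow> k \<in> bar n V \<Longrightarrow>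
   inf_count (sym_diff V {idx k}) = inf_count V - of_bool (x k = \<infinity>) + of_bool (x (star k) = \<infinity>)"
  unfolding inf_count_def by (rule sum_bar_sym_diff_idx)

lemma supp_sum_sym_diff_idx:
  "V \<subseteq> {1..n} \<Longrightarrow> k \<in> Jset n \<Longrightarrow> k \<in> bar n V \<Longrightarrow>
   supp_sum (sym_diff V {idx k}) = supp_sum V - real_of_ereal (x k) + real_of_ereal (x (star k))"
  unfolding supp_sum_def by (rule sum_bar_sym_diff_idx)

lemma sym_diff_idx_supp:
  assumes "V \<subseteq> {1..n}" "k \<in> supp n x" "k \<in> bar n V"
  shows "inf_count (sym_diff V {idx k}) = inf_count V + 1"
    and "supp_sum (sym_diff V {idx k}) = supp_sum V - real_of_ereal (x k)"
  using inf_count_sym_diff_idx[OF assms(1) supp_Jset assms(3)]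
    supp_sum_sym_diff_idx[OF assms(1) supp_Jset assms(3)]
    assms(2) supp_star[OF assms(2)] supp_iff[OF supp_Jset]
  by simp_all


lemma exists_optimal: "\<exists>U. optimal U"
proof -
  have "finite (Collect feasible)"
    by (rule finite_subset[of _ "Pow {1..n}"]) (unfold feasible_def, blast, simp)
  moreover have "Collect feasible \<noteq> {}"
    using wick by (auto simp: tropical_wick_def feasible_def)
  ultimately show ?thesis
    using ex_is_arg_min_if_finite unfolding optimal_def by fastforce
qed

lemma optimalD:
  assumes "optimal U"
  shows "feasible U"
    and "feasible V \<Longrightarrow> inf_count V \<le> inf_count U"
    and "feasible V \<Longrightarrow> inf_count V = inf_count U \<Longrightarrow> weight U \<le> weight V"
  using assms unfolding optimal_def is_arg_min_linorder by auto

lemma optimal_if_no_worse: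
  "optimal U \<Longrightarrow> feasible V \<Longrightarrow> inf_count V = inf_count U \<Longrightarrow> weight V \<le> weight U \<Longrightarrow> optimal V"
  unfolding optimal_def by (erule is_arg_min_antimono) simp_all

lemma circuit_partner:
  assumes U: "U \<subseteq> {1..n}" and k0: "k0 \<in> Jset n" "k0 \<in> bar n U"
    and finite: "x k0 + p (sym_diff U {idx k0}) \<noteq> \<infinity>"
  obtains k where "k \<in> Jset n" "k \<in> bar n U" "k \<noteq> k0"
    "x k + p (sym_diff U {idx k}) \<le> x k0 + p (sym_diff U {idx k0})"
proof -
  define c where "c = (\<lambda>k. circ_vec n p U k + ereal 0)"
  define f where "f k = x k + c k" for k
  have c_eq: "c k = (if k \<in> Jset n \<and> k \<in> bar n U then p (sym_diff U {idx k}) else \<infinity>)" for k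
    by (simp add: c_def circ_vec_eq)
  have f_k0: "f k0 = x k0 + p (sym_diff U {idx k0})"
    using k0 by (simp add: f_def c_eq)
  have "k0 \<in> supp n c"
    using k0 finite by (auto simp: supp_def c_eq)
  then have "c \<in> circuits n p"
    unfolding circuits_def using U c_def by blast
  then have "min_twice (Jset n) f"
    using x_orth_circuit unfolding trop_orth_def f_def by blast
  then obtain k where k: "k \<in> Jset n" "k \<noteq> k0" "f k \<le> f k0"
    using k0(1) finite f_k0 unfolding min_twice_iff by metis
  then have "f k \<noteq> \<infinity>"
    using finite f_k0 by (metis ereal_infty_less_eq(1))
  then have "k \<in> bar n U"
    using k(1) by (cases "k \<in> bar n U") (auto simp: f_def c_eq)
  then show thesis
    using that k f_k0 by (simp add: f_def c_eq)
qed


lemma optimal_exchange: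
  assumes opt: "optimal U" and k0: "k0 \<in> supp n x"
  obtains V where "optimal V" "k0 \<in> bar n V"
proof (cases "k0 \<in> bar n U")
  case True
  with opt that show ?thesis by blast
next
  case False
  have U: "U \<subseteq> {1..n}" "feasible U"
    using optimalD(1)[OF opt] by (simp_all add: feasible_def)
  obtain a u where a: "x k0 = ereal a" and u: "p U = ereal u"
    using supp_x_real[OF k0] feasible_p_real[OF U(2)] by metis
  have k0_J: "k0 \<in> Jset n"
    using supp_Jset[OF k0] .
  define U0 where "U0 = sym_diff U {idx k0}"
  have U0: "U0 \<subseteq> {1..n}"
    unfolding U0_def using U(1) k0_J by (rule sym_diff_idx_subset)
  have k0_U0: "k0 \<in> bar n U0"
    using False unfolding U0_def bar_sym_diff_idx[OF U(1) k0_J] by simp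
  have U0_U: "sym_diff U0 {idx k0} = U"
    by (auto simp: U0_def)
  \<comment> \<open>orthogonality to the circuit of U0 trades k0 for another coordinate k of the support\<close>
  obtain k where k: "k \<in> Jset n" "k \<in> bar n U0" "k \<noteq> k0"
    and k_le: "x k + p (sym_diff U0 {idx k}) \<le> ereal (a + u)"
    using circuit_partner[OF U0 k0_J k0_U0] unfolding U0_U a u by auto
  define V where "V = sym_diff U0 {idx k}"
  have "x k \<noteq> \<infinity>" "p V \<noteq> \<infinity>"
    using k_le unfolding V_def by auto
  then have k_supp: "k \<in> supp n x" and V: "feasible V"
    using supp_iff[OF k(1)] sym_diff_idx_subset[OF U0 k(1)] by (simp_all add: feasible_def V_def)
  obtain b v where b: "x k = ereal b" and v: "p V = ereal v"
    using supp_x_real[OF k_supp] feasible_p_real[OF V] by metis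
  have "k0 \<noteq> star k"
    using k(2) k0_U0 star_in_bar_iff[OF U0 k(1)] by auto
  then have k0_V: "k0 \<in> bar n V"
    using k0_U0 k(3) unfolding V_def bar_sym_diff_idx[OF U0 k(1)] by simp
  have "inf_count V = inf_count U"
    using sym_diff_idx_supp(1)[OF U0 k_supp k(2)] sym_diff_idx_supp(1)[OF U0 k0 k0_U0]
    unfolding V_def U0_U by simp
  moreover have "weight V \<le> weight U"
    using k_le sym_diff_idx_supp(2)[OF U0 k_supp k(2)] sym_diff_idx_supp(2)[OF U0 k0 k0_U0]
    unfolding weight_def V_def U0_U using a b u v by (simp add: V_def)
  ultimately have "optimal V"
    using optimal_if_no_worse[OF opt V] by blast
  with k0_V that show ?thesis by blast
qed


lemma optimal_cocirc_bound:
  assumes opt: "optimal U" and k0: "k0 \<in> supp n x" "k0 \<in> bar n U"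
    and u: "p U = ereal u" and a: "x k0 = ereal a"
  shows "x k \<le> cocirc_vec n p (sym_diff U {idx k0}) k + ereal (a - u)"
proof (cases "k \<in> Jset n \<and> k \<notin> bar n (sym_diff U {idx k0})")
  case False
  then show ?thesis by (auto simp: cocirc_vec_eq)
next
  case True
  define T where "T = sym_diff U {idx k0}"
  define V where "V = sym_diff T {idx k}"
  have U: "U \<subseteq> {1..n}"
    using optimalD(1)[OF opt] by (simp add: feasible_def)
  have T: "T \<subseteq> {1..n}"
    unfolding T_def using U supp_Jset[OF k0(1)] by (rule sym_diff_idx_subset)
  have k: "k \<in> Jset n" "k \<notin> bar n T"
    using True by (simp_all add: T_def)
  have V_sub: "V \<subseteq> {1..n}" and k_V: "k \<in> bar n V" and V_T: "sym_diff V {idx k} = T"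
    using sym_diff_idx_subset[OF T k(1)] k unfolding V_def bar_sym_diff_idx[OF T k(1)] by auto
  have cocirc: "cocirc_vec n p T k = p V"
    using k by (simp add: cocirc_vec_eq V_def)
  show ?thesis
  proof (cases "p V = \<infinity>")
    case True
    then show ?thesis using cocirc by (simp add: T_def)
  next
    case False
    then have V: "feasible V"
      using V_sub by (simp add: feasible_def)
    have count_T: "inf_count T = inf_count U + 1" and sum_T: "supp_sum T = supp_sum U - a"
      using sym_diff_idx_supp[OF U k0] a by (simp_all add: T_def)
    \<comment> \<open>k outside the support would give V a larger count than the optimal U\<close>
    have k_supp: "k \<in> supp n x"
    proof (rule ccontr)
      assume "k \<notin> supp n x"
      then have "inf_count T \<le> inf_count V"
        using inf_count_sym_diff_idx[OF V_sub k(1) k_V] supp_iff[OF k(1)] unfolding V_T by simp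
      then show False
        using optimalD(2)[OF opt V] count_T by simp
    qed
    obtain b v where b: "x k = ereal b" and v: "p V = ereal v"
      using supp_x_real[OF k_supp] feasible_p_real[OF V] by metis
    have "inf_count V = inf_count U" "supp_sum V = supp_sum U - a + b"
      using sym_diff_idx_supp[OF V_sub k_supp k_V] count_T sum_T b unfolding V_T by simp_all
    then have "weight U \<le> weight V"
      using optimalD(3)[OF opt V] by simp
    then have "b \<le> v + (a - u)"
      using \<open>supp_sum V = supp_sum U - a + b\<close> u v by (simp add: weight_def)
    then show ?thesis
      using cocirc b v by (simp add: T_def)
  qed
qed

lemma dominating_cocircuit:
  assumes k0: "k0 \<in> supp n x"
  shows "\<exists>d\<in>cocircuits n p. (\<forall>k. x k \<le> d k) \<and> d k0 = x k0"
proof -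
  obtain U where opt: "optimal U" and k0_U: "k0 \<in> bar n U"
    using exists_optimal optimal_exchange[OF _ k0] by metis
  have U: "U \<subseteq> {1..n}" "feasible U"
    using optimalD(1)[OF opt] by (simp_all add: feasible_def)
  obtain a u where a: "x k0 = ereal a" and u: "p U = ereal u"
    using supp_x_real[OF k0] feasible_p_real[OF U(2)] by metis
  have k0_J: "k0 \<in> Jset n"
    using supp_Jset[OF k0] .
  define T where "T = sym_diff U {idx k0}"
  define d where "d = (\<lambda>k. cocirc_vec n p T k + ereal (a - u))"
  have "k0 \<notin> bar n T" "sym_diff T {idx k0} = U"
    using k0_U unfolding T_def bar_sym_diff_idx[OF U(1) k0_J] by auto
  then have d_k0: "d k0 = x k0"
    using k0_J a u by (simp add: d_def cocirc_vec_eq)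
  have "T \<subseteq> {1..n}"
    unfolding T_def using U(1) k0_J by (rule sym_diff_idx_subset)
  moreover have "k0 \<in> supp n d"
    using d_k0 a k0_J by (simp add: supp_def)
  ultimately have "d \<in> cocircuits n p"
    unfolding cocircuits_def d_def by blast
  moreover have "x k \<le> d k" for k
    unfolding d_def T_def using optimal_cocirc_bound[OF opt k0 k0_U u a] .
  ultimately show ?thesis
    using d_k0 by blast
qed

end

theorem theorem6p9:
  fixes n :: nat and p :: "nat set \<Rightarrow> ereal"
  assumes "tropical_wick n p"
  shows "cocycle_space n p = {x. admissible_vec n x \<and> x \<in> trop_hull (cocircuits n p)}"
proof (intro set_eqI iffI)
  fix x
  assume x: "x \<in> cocycle_space n p"
  then interpret cocycle n p x
    using assms by unfold_locales
  have "x k = \<infinity>" if "k \<notin> supp n x" for k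
    using that x by (auto simp: supp_def cocycle_space_def admissible_vec_def tvec_def)
  then have "x \<in> trop_hull (cocircuits n p)"
    using dominating_cocircuit by (intro mem_trop_hullI[of "supp n x"]) (simp_all add: supp_def)
  then show "x \<in> {x. admissible_vec n x \<and> x \<in> trop_hull (cocircuits n p)}"
    using x by (simp add: cocycle_space_def)
next
  fix x
  assume "x \<in> {x. admissible_vec n x \<and> x \<in> trop_hull (cocircuits n p)}"
  then show "x \<in> cocycle_space n p"
    using trop_orth_trop_hull cocircuit_circuit_orth[OF assms] by (auto simp: cocycle_space_def)
qed

end
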